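(* $W^+$ is a normal subgroup of $G$, and the cosets of $W^+$ in $G$ are $W^+$, $\tau_xW^+$, $\tau_yW^+$, $\tau_zW^+$, $\varrho W^+$, $\varrho^2W^+$. The quotient $G/W^+$ is isomorphic to the symmetric group $S_3$.
   Context: $\mathbb F$ is a field of characteristic zero, $\mathfrak{sl}_2$ the Lie algebra of $2\times2$ trace-zero matrices over $\mathbb F$ with trace form $(u,v)=\mathrm{tr}(uv)$. Equitable basis: $x=\begin{pmatrix}1&0\\0&-1\end{pmatrix}$, $y=\begin{pmatrix}-1&2\\0&1\end{pmatrix}$, $z=\begin{pmatrix}-1&0\\-2&1\end{pmatrix}$. Let $x^*=\begin{pmatrix}1&-1\\1&-1\end{pmatrix}$, $y^*=\begin{pmatrix}0&0\\1&0\end{pmatrix}$, $z^*=\begin{pmatrix}0&-1\\0&0\end{pmatrix}$, and $\sigma_x=\exp(\mathrm{ad}\,x^* )$, $\sigma_y=\exp(\mathrm{ad}\,y^* )$, $\sigma_z=\exp(\mathrm{ad}\,z^* )$. $G=\langle\sigma_x,\sigma_y,\sigma_z\rangle\subseteq\mathrm{Aut}_{\mathbb F}(\mathfrak{sl}_2)$. $\varrho$ is the automorphism of $\mathfrak{sl}_2$ with $\varrho(x)=y,\varrho(y)=z,\varrho(z)=x$ (it equals $\sigma_x\sigma_y$). $\tau_x=\sigma_y\sigma_z\sigma_y$, $\tau_y=\sigma_z\sigma_x\sigma_z$, $\tau_z=\sigma_x\sigma_y\sigma_x$. For $u\in\{x,y,z\}$, $r_u(v)=v-(u,v)u$; $W=\langle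 r_x,r_y,r_z\rangle$, and $W^+$ is the subgroup of elements of $W$ of even length with respect to the generators $r_x,r_y,r_z$. *)

theory Defs
  imports "HOL-Analysis.Analysis" "HOL-Algebra.Bij" "HOL-Algebra.Sym_Groups"
    "HOL-Algebra.Generated_Groups" "HOL-Algebra.Coset"
begin

definition mat2 :: "'a::field_char_0 \<Rightarrow> 'a \<Rightarrow> 'a \<Rightarrow> 'a \<Rightarrow> 'a^2^2" where
  "mat2 a b c d = (\<chi> i j. if i = 1 then (if j = 1 then a else b) else (if j = 1 then c else d))"

definition smat :: "'a::field_char_0 \<Rightarrow> 'a^2^2 \<Rightarrow> 'a^2^2" where
  "smat c A = (\<chi> i j. c * A$i$j)"

definition sl2 :: "(('a::field_char_0)^2^2) set" where
  "sl2 = {A. trace A = 0}"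

definition lie_br :: "'a::field_char_0^2^2 \<Rightarrow> 'a^2^2 \<Rightarrow> 'a^2^2" where
  "lie_br u v = u ** v - v ** u"

definition ad :: "'a::field_char_0^2^2 \<Rightarrow> 'a^2^2 \<Rightarrow> 'a^2^2" where
  "ad a = (\<lambda>v. lie_br a v)"

definition tform :: "'a::field_char_0^2^2 \<Rightarrow> 'a^2^2 \<Rightarrow> 'a" where
  "tform u v = trace (u ** v)"

definition nil_index :: "('a::field_char_0^2^2 \<Rightarrow> 'a^2^2) \<Rightarrow> nat" where
  "nil_index f = (LEAST n. \<forall>v\<in>sl2. (f ^^ n) v = 0)"

definition exp_nil :: "('a::field_char_0^2^2 \<Rightarrow> 'a^2^2) \<Rightarrow> ('a^2^2 \<Rightarrow> 'a^2^2)" where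
  "exp_nil f = (\<lambda>v\<in>sl2. \<Sum>k<nil_index f. smat (inverse (fact k)) ((f ^^ k) v))"

abbreviation Bsl2 :: "(('a::field_char_0)^2^2 \<Rightarrow> 'a^2^2) monoid" where
  "Bsl2 \<equiv> BijGroup sl2"

definition ex :: "'a::field_char_0^2^2" where "ex = mat2 1 0 0 (-1)"
definition ey :: "'a::field_char_0^2^2" where "ey = mat2 (-1) 2 0 1"
definition ez :: "'a::field_char_0^2^2" where "ez = mat2 (-1) 0 (-2) 1"

definition xs :: "'a::field_char_0^2^2" where "xs = mat2 1 (-1) 1 (-1)"
definition ys :: "'a::field_char_0^2^2" where "ys = mat2 0 0 1 0"
definition zs :: "'a::field_char_0^2^2" where "zs = mat2 0 (-1) 0 0"

definition sigma_x :: "'a::field_char_0^2^2 \<Rightarrow> 'a^2^2" where "sigma_x = exp_nil (ad xs)"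
definition sigma_y :: "'a::field_char_0^2^2 \<Rightarrow> 'a^2^2" where "sigma_y = exp_nil (ad ys)"
definition sigma_z :: "'a::field_char_0^2^2 \<Rightarrow> 'a^2^2" where "sigma_z = exp_nil (ad zs)"

definition Ggrp :: "(('a::field_char_0)^2^2 \<Rightarrow> 'a^2^2) monoid" where
  "Ggrp = subgroup_generated Bsl2 {sigma_x, sigma_y, sigma_z}"

definition rho :: "'a::field_char_0^2^2 \<Rightarrow> 'a^2^2" where
  "rho = (THE f. f \<in> extensional sl2
      \<and> (\<forall>u\<in>sl2. \<forall>v\<in>sl2. f (u + v) = f u + f v)
      \<and> (\<forall>c. \<forall>u\<in>sl2. f (smat c u) = smat c (f u))
      \<and> f ex = ey \<and> f ey = ez \<and> f ez = ex)"

definition tau_x :: "'a::field_char_0^2^2 \<Rightarrow> 'a^2^2" where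
  "tau_x = sigma_y \<otimes>\<^bsub>Bsl2\<^esub> sigma_z \<otimes>\<^bsub>Bsl2\<^esub> sigma_y"
definition tau_y :: "'a::field_char_0^2^2 \<Rightarrow> 'a^2^2" where
  "tau_y = sigma_z \<otimes>\<^bsub>Bsl2\<^esub> sigma_x \<otimes>\<^bsub>Bsl2\<^esub> sigma_z"
definition tau_z :: "'a::field_char_0^2^2 \<Rightarrow> 'a^2^2" where
  "tau_z = sigma_x \<otimes>\<^bsub>Bsl2\<^esub> sigma_y \<otimes>\<^bsub>Bsl2\<^esub> sigma_x"

definition refl :: "'a::field_char_0^2^2 \<Rightarrow> 'a^2^2 \<Rightarrow> 'a^2^2" where
  "refl u = (\<lambda>v\<in>sl2. v - smat (tform u v) u)"

definition Wgens :: "(('a::field_char_0)^2^2 \<Rightarrow> 'a^2^2) set" where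
  "Wgens = {refl ex, refl ey, refl ez}"

definition Wset :: "(('a::field_char_0)^2^2 \<Rightarrow> 'a^2^2) set" where
  "Wset = generate Bsl2 Wgens"

definition wprod :: "('a::field_char_0^2^2 \<Rightarrow> 'a^2^2) list \<Rightarrow> ('a^2^2 \<Rightarrow> 'a^2^2)" where
  "wprod ws = foldr (\<lambda>g acc. g \<otimes>\<^bsub>Bsl2\<^esub> acc) ws \<one>\<^bsub>Bsl2\<^esub>"

definition wlen :: "('a::field_char_0^2^2 \<Rightarrow> 'a^2^2) \<Rightarrow> nat" where
  "wlen w = (LEAST n. \<exists>ws. set ws \<subseteq> Wgens \<and> length ws = n \<and> wprod ws = w)"

definition Wplus :: "(('a::field_char_0)^2^2 \<Rightarrow> 'a^2^2) set" where
  "Wplus = {w \<in> Wset. even (wlen w)}"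

end

theory Submission
  imports Defs
begin

text \<open>
  Each automorphism occurring in the statement has an integer matrix with
  respect to the equitable basis \<open>x, y, z\<close> of \<open>sl\<^sub>2\<close>: the \<open>\<sigma>\<close>'s are computed from their
  (finite) exponential series, the reflections and \<open>\<varrho>\<close> directly. Reduced modulo 2, the
  reflections become the identity and \<open>\<sigma>\<^sub>x, \<sigma>\<^sub>y, \<sigma>\<^sub>z\<close> become the permutation matrices
  of the transpositions \<open>(2 3), (1 3), (1 2)\<close>. This gives a homomorphism \<open>G \<rightarrow> S\<^sub>3\<close>, onto
  because transpositions generate \<open>S\<^sub>3\<close>. \<open>W\<^sup>+\<close>, the even words in the reflections, lies in
  \<open>G\<close> (e.g. \<open>r\<^sub>y r\<^sub>z = \<sigma>\<^sub>x\<^sup>2\<close>) and in the kernel. Conversely a finite coset table shows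
  that \<open>G\<close> is covered by the cosets \<open>t W\<^sup>+\<close>, \<open>t \<in> {1, \<tau>\<^sub>x, \<tau>\<^sub>y, \<tau>\<^sub>z, \<varrho>, \<varrho>\<^sup>2}\<close>, and only
  \<open>t = 1\<close> reduces to the identity, so the kernel is exactly \<open>W\<^sup>+\<close>. Normality, the list of
  cosets and \<open>G/W\<^sup>+ \<cong> S\<^sub>3\<close> then follow from the homomorphism theorem.
\<close>

text \<open>Maps of \<open>sl\<^sub>2\<close> (represented, as in the group of bijections, by functions on all
  \<open>2\<times>2\<close> matrices).\<close>

type_synonym 'a sl2_map = "'a^2^2 \<Rightarrow> 'a^2^2"

lemma mat2_nth [simp]:
  "mat2 a b c d $ 1 $ 1 = a" "mat2 a b c d $ 1 $ 2 = b"
  "mat2 a b c d $ 2 $ 1 = c" "mat2 a b c d $ 2 $ 2 = d"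
  by (simp_all add: mat2_def)

lemma mat2_eta: "(A :: 'a::field_char_0^2^2) = mat2 (A$1$1) (A$1$2) (A$2$1) (A$2$2)"
  by (simp add: vec_eq_iff forall_2)

lemma mat2_eq_iff [simp]:
  "mat2 a b c d = mat2 a' b' c' d' \<longleftrightarrow> a = a' \<and> b = b' \<and> c = c' \<and> d = d'"
  by (simp add: vec_eq_iff forall_2 mat2_def)

lemma mat2_mult [simp]:
  "mat2 a b c d ** mat2 e f g h = mat2 (a*e+b*g) (a*f+b*h) (c*e+d*g) (c*f+d*h)"
  by (simp add: matrix_matrix_mult_def vec_eq_iff forall_2 sum_2)

lemma mat2_add [simp]: "mat2 a b c d + mat2 e f g h = mat2 (a+e) (b+f) (c+g) (d+h)"
  by (simp add: vec_eq_iff forall_2)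

lemma mat2_diff [simp]: "mat2 a b c d - mat2 e f g h = mat2 (a-e) (b-f) (c-g) (d-h)"
  by (simp add: vec_eq_iff forall_2)

lemma mat2_smat [simp]: "smat k (mat2 a b c d) = mat2 (k*a) (k*b) (k*c) (k*d)"
  by (simp add: vec_eq_iff forall_2 smat_def)

lemma mat2_zero: "(0 :: 'a::field_char_0^2^2) = mat2 0 0 0 0"
  by (simp add: vec_eq_iff forall_2)

lemma mat2_trace [simp]: "trace (mat2 a b c d) = a + d"
  by (simp add: trace_def sum_2)

lemma sl2_mat2 [simp]: "mat2 a b c d \<in> sl2 \<longleftrightarrow> d = - a"
  by (simp add: sl2_def add_eq_0_iff)

lemma sl2_cases:
  assumes "v \<in> sl2"
  obtains a b c where "v = mat2 a b c (-a)"
  using assms mat2_eta[of v] sl2_mat2 by metis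

lemma sl2_add: "u \<in> sl2 \<Longrightarrow> v \<in> sl2 \<Longrightarrow> u + v \<in> sl2"
  by (auto elim!: sl2_cases)

lemma sl2_smat: "u \<in> sl2 \<Longrightarrow> smat c u \<in> sl2"
  by (auto elim!: sl2_cases)

lemma basis_in_sl2 [simp]: "ex \<in> sl2" "ey \<in> sl2" "ez \<in> sl2"
  by (simp_all add: ex_def ey_def ez_def)


section \<open>Coordinates with respect to the equitable basis\<close>

definition coord_x :: "'a::field_char_0^2^2 \<Rightarrow> 'a" where
  "coord_x v = v$1$1 + v$1$2/2 - v$2$1/2"
definition coord_y :: "'a::field_char_0^2^2 \<Rightarrow> 'a" where
  "coord_y v = v$1$2/2"
definition coord_z :: "'a::field_char_0^2^2 \<Rightarrow> 'a" where
  "coord_z v = - v$2$1/2"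

definition of_coords :: "'a::field_char_0 \<Rightarrow> 'a \<Rightarrow> 'a \<Rightarrow> 'a^2^2" where
  "of_coords p q r = smat p ex + smat q ey + smat r ez"

lemma of_coords_mat2: "of_coords p q r = mat2 (p-q-r) (2*q) (-2*r) (q+r-p)"
  by (simp add: of_coords_def ex_def ey_def ez_def algebra_simps)

lemma of_coords_in_sl2 [simp]: "of_coords p q r \<in> sl2"
  by (simp add: of_coords_mat2)

lemma coords_of_coords [simp]:
  "coord_x (of_coords p q r) = p" "coord_y (of_coords p q r) = q" "coord_z (of_coords p q r) = r"
  by (simp_all add: of_coords_mat2 coord_x_def coord_y_def coord_z_def)

lemma of_coords_coords: "v \<in> sl2 \<Longrightarrow> of_coords (coord_x v) (coord_y v) (coord_z v) = v"
  by (erule sl2_cases) (simp add: of_coords_mat2 coord_x_def coord_y_def coord_z_def)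

lemma coords_basis [simp]:
  "coord_x ex = 1" "coord_y ex = 0" "coord_z ex = 0"
  "coord_x ey = 0" "coord_y ey = 1" "coord_z ey = 0"
  "coord_x ez = 0" "coord_y ez = 0" "coord_z ez = 1"
  by (simp_all add: ex_def ey_def ez_def coord_x_def coord_y_def coord_z_def)


section \<open>Integer \<open>3\<times>3\<close> matrices\<close>

text \<open>All automorphisms occurring in the theorem have integer matrices with respect to the
  equitable basis. We represent such matrices concretely (row-major), so that identities
  between them are decided by evaluation.\<close>

datatype imat = IMat int int int int int int int int int

fun imult :: "imat \<Rightarrow> imat \<Rightarrow> imat" where
  "imult (IMat a b c d e f g h i) (IMat a' b' c' d' e' f' g' h' i') =
    IMat (a*a'+b*d'+c*g') (a*b'+b*e'+c*h') (a*c'+b*f'+c*i')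
         (d*a'+e*d'+f*g') (d*b'+e*e'+f*h') (d*c'+e*f'+f*i')
         (g*a'+h*d'+i*g') (g*b'+h*e'+i*h') (g*c'+h*f'+i*i')"

definition ione :: imat where "ione = IMat 1 0 0 0 1 0 0 0 1"

fun idet :: "imat \<Rightarrow> int" where
  "idet (IMat a b c d e f g h i) = a*(e*i - f*h) - b*(d*i - f*g) + c*(d*h - e*g)"

fun iscale :: "int \<Rightarrow> imat \<Rightarrow> imat" where
  "iscale k (IMat a b c d e f g h i) = IMat (k*a) (k*b) (k*c) (k*d) (k*e) (k*f) (k*g) (k*h) (k*i)"

fun iadj :: "imat \<Rightarrow> imat" where
  "iadj (IMat a b c d e f g h i) =
     IMat (e*i - f*h) (c*h - b*i) (b*f - c*e)
          (f*g - d*i) (a*i - c*g) (c*d - a*f)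
          (d*h - e*g) (b*g - a*h) (a*e - b*d)"

text \<open>A matrix of determinant \<open>\<plusminus>1\<close> is invertible over the integers, with inverse
  \<open>det A \<cdot> adj A\<close>.\<close>

definition unimodular :: "imat \<Rightarrow> bool" where
  "unimodular A \<longleftrightarrow> idet A = 1 \<or> idet A = -1"

definition iinv :: "imat \<Rightarrow> imat" where
  "iinv A = iscale (idet A) (iadj A)"

lemma idet_imult: "idet (imult A B) = idet A * idet B"
  by (cases A; cases B) (simp add: algebra_simps)

lemma imult_iinv:
  assumes "unimodular A"
  shows "imult A (iinv A) = ione" "imult (iinv A) A = ione"
proof -
  have det_sq: "idet A * idet A = 1"
    using assms by (auto simp: unimodular_def)
  have adj: "imult A (iadj A) = iscale (idet A) ione" "imult (iadj A) A = iscale (idet A) ione"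
    by (cases A, simp add: ione_def algebra_simps)+
  have scale: "imult A (iscale k B) = iscale k (imult A B)" "imult (iscale k A) B = iscale k (imult A B)"
    "iscale k (iscale l A) = iscale (k * l) A" "iscale 1 A = A" for k l A B
    by (cases A; cases B; simp add: algebra_simps)+
  show "imult A (iinv A) = ione" "imult (iinv A) A = ione"
    by (simp_all add: iinv_def scale adj det_sq)
qed

lemma unimodular_ione [simp]: "unimodular ione"
  by (simp add: unimodular_def ione_def)

lemma unimodular_imult: "unimodular A \<Longrightarrow> unimodular B \<Longrightarrow> unimodular (imult A B)"
  by (auto simp: unimodular_def idet_imult)

lemma unimodular_iinv: "unimodular A \<Longrightarrow> unimodular (iinv A)"
  using idet_imult[of A "iinv A"] imult_iinv(1)[of A]
  by (auto simp: unimodular_def ione_def zmult_eq_1_iff)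


text \<open>The linear map of \<open>sl\<^sub>2\<close> whose matrix in the equitable basis is \<open>A\<close> (column \<open>j\<close>
  holds the coordinates of the image of the \<open>j\<close>-th basis vector), extended by
  \<open>undefined\<close> outside \<open>sl\<^sub>2\<close> as required in the group of bijections.\<close>

fun act :: "imat \<Rightarrow> 'a::field_char_0 sl2_map" where
  "act (IMat a b c d e f g h i) = (\<lambda>v\<in>sl2.
     of_coords (of_int a * coord_x v + of_int b * coord_y v + of_int c * coord_z v)
               (of_int d * coord_x v + of_int e * coord_y v + of_int f * coord_z v)
               (of_int g * coord_x v + of_int h * coord_y v + of_int i * coord_z v))"

lemma act_in_sl2: "v \<in> sl2 \<Longrightarrow> act A v \<in> sl2"
  by (cases A) simp

lemma act_extensional: "act A \<in> extensional sl2"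
  by (cases A) simp

lemma act_basis:
  "act (IMat a b c d e f g h i) ex = of_coords (of_int a) (of_int d) (of_int g)"
  "act (IMat a b c d e f g h i) ey = of_coords (of_int b) (of_int e) (of_int h)"
  "act (IMat a b c d e f g h i) ez = of_coords (of_int c) (of_int f) (of_int i)"
  by simp_all

lemma act_act: "v \<in> sl2 \<Longrightarrow> act A (act B v) = act (imult A B) v"
  by (cases A; cases B) (simp add: algebra_simps)

lemma act_ione: "act ione = (\<lambda>v\<in>sl2. v)"
  by (rule ext) (simp add: ione_def of_coords_coords)

lemma act_inj:
  assumes "act A = (act B :: 'a::field_char_0 sl2_map)"
  shows "A = B"
proof -
  have "coord (act A b) = coord (act B b)" for coord :: "'a^2^2 \<Rightarrow> 'a" and b
    using assms by simp
  from this[of coord_x ex] this[of coord_y ex] this[of coord_z ex]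
       this[of coord_x ey] this[of coord_y ey] this[of coord_z ey]
       this[of coord_x ez] this[of coord_y ez] this[of coord_z ez]
  show "A = B"
    by (cases A; cases B) (simp del: act.simps add: act_basis)
qed

lemma compose_act: "compose sl2 (act A) (act B) = act (imult A B)"
  by (rule ext) (simp add: compose_def act_act act_extensional[THEN extensional_arb])

lemma act_Bij: "unimodular A \<Longrightarrow> act A \<in> Bij sl2"
  unfolding Bij_def
  by (auto intro!: bij_betwI[where g = "act (iinv A)"] act_extensional
      simp: act_in_sl2 act_act imult_iinv act_ione)

interpretation Bsl2: group "Bsl2 :: ('a::field_char_0 sl2_map) monoid"
  by (rule group_BijGroup)

lemma act_carrier [simp]: "unimodular A \<Longrightarrow> act A \<in> carrier Bsl2"
  by (simp add: BijGroup_def act_Bij)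

lemma act_imult: "unimodular A \<Longrightarrow> unimodular B \<Longrightarrow> act A \<otimes>\<^bsub>Bsl2\<^esub> act B = act (imult A B)"
  by (simp add: BijGroup_def act_Bij compose_act)

lemma one_Bsl2: "\<one>\<^bsub>Bsl2\<^esub> = act ione"
  by (simp add: BijGroup_def act_ione)

lemma inv_act:
  assumes "unimodular A"
  shows "inv\<^bsub>Bsl2\<^esub> (act A :: 'a::field_char_0 sl2_map) = act (iinv A)"
  using assms unimodular_iinv[OF assms]
  by (intro Bsl2.inv_equality) (simp_all add: act_imult imult_iinv one_Bsl2)


lemma nil_index_eqI:
  assumes vanish: "\<forall>v\<in>sl2. (f ^^ Suc n) v = 0"
    and witness: "w \<in> sl2" "(f ^^ n) w \<noteq> 0"
    and zero: "f 0 = 0"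
  shows "nil_index f = Suc n"
  unfolding nil_index_def
proof (rule Least_equality)
  fix m assume m: "\<forall>v\<in>sl2. (f ^^ m) v = 0"
  have fix0: "(f ^^ k) 0 = 0" for k
    using zero by (induction k) simp_all
  show "Suc n \<le> m"
  proof (rule ccontr)
    assume "\<not> Suc n \<le> m"
    then have "n = (n - m) + m"
      by simp
    then have "(f ^^ n) w = (f ^^ (n - m)) ((f ^^ m) w)"
      by (metis funpow_add comp_apply)
    then show False
      using m witness fix0 by simp
  qed
qed (fact vanish)

lemma exp_nil_index3_eqI:
  assumes index: "nil_index f = 3"
    and series: "\<And>v. v \<in> sl2 \<Longrightarrow> v + f v + smat (1/2) (f (f v)) = act A v"
  shows "exp_nil f = act A"
proof (rule extensionalityI[where A = sl2])
  show "exp_nil f \<in> extensional sl2" "act A \<in> extensional sl2"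
    by (simp_all add: exp_nil_def act_extensional)
next
  fix v :: "'a::field_char_0^2^2" assume v: "v \<in> sl2"
  have "smat 1 u = u" for u :: "'a^2^2"
    by (simp add: smat_def vec_eq_iff)
  then have "exp_nil f v = v + f v + smat (1/2) (f (f v))"
    using index v by (simp add: exp_nil_def numeral_3_eq_3 inverse_eq_divide)
  then show "exp_nil f v = act A v"
    using series[OF v] by simp
qed

definition SX :: imat where "SX = IMat 1 0 0 2 2 (-1) 0 1 0"
definition SY :: imat where "SY = IMat 0 0 1 0 1 0 (-1) 2 2"
definition SZ :: imat where "SZ = IMat 2 (-1) 2 1 0 0 0 0 1"
definition RX :: imat where "RX = IMat (-1) 2 2 0 1 0 0 0 1"
definition RY :: imat where "RY = IMat 1 0 0 2 (-1) 2 0 0 1"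
definition RZ :: imat where "RZ = IMat 1 0 0 0 1 0 2 2 (-1)"

lemmas imat_defs = SX_def SY_def SZ_def RX_def RY_def RZ_def ione_def iinv_def

lemma sigma_x_act: "sigma_x = act SX"
  unfolding sigma_x_def
proof (rule exp_nil_index3_eqI)
  have "nil_index (ad (xs :: 'a::field_char_0^2^2)) = Suc 2"
    by (rule nil_index_eqI[where w = "mat2 1 0 0 (-1)"])
       (auto simp: ad_def lie_br_def xs_def numeral_2_eq_2 mat2_zero elim!: sl2_cases)
  then show "nil_index (ad (xs :: 'a^2^2)) = 3"
    by simp
next
  fix v :: "'a^2^2" assume "v \<in> sl2"
  then show "v + ad xs v + smat (1/2) (ad xs (ad xs v)) = act SX v"
    by (auto simp: ad_def lie_br_def xs_def SX_def of_coords_mat2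
        coord_x_def coord_y_def coord_z_def field_simps elim!: sl2_cases)
qed

lemma sigma_y_act: "sigma_y = act SY"
  unfolding sigma_y_def
proof (rule exp_nil_index3_eqI)
  have "nil_index (ad (ys :: 'a::field_char_0^2^2)) = Suc 2"
    by (rule nil_index_eqI[where w = "mat2 0 1 0 0"])
       (auto simp: ad_def lie_br_def ys_def numeral_2_eq_2 mat2_zero elim!: sl2_cases)
  then show "nil_index (ad (ys :: 'a^2^2)) = 3"
    by simp
next
  fix v :: "'a^2^2" assume "v \<in> sl2"
  then show "v + ad ys v + smat (1/2) (ad ys (ad ys v)) = act SY v"
    by (auto simp: ad_def lie_br_def ys_def SY_def of_coords_mat2
        coord_x_def coord_y_def coord_z_def field_simps elim!: sl2_cases)
qed

lemma sigma_z_act: "sigma_z = act SZ"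
  unfolding sigma_z_def
proof (rule exp_nil_index3_eqI)
  have "nil_index (ad (zs :: 'a::field_char_0^2^2)) = Suc 2"
    by (rule nil_index_eqI[where w = "mat2 0 0 1 0"])
       (auto simp: ad_def lie_br_def zs_def numeral_2_eq_2 mat2_zero elim!: sl2_cases)
  then show "nil_index (ad (zs :: 'a^2^2)) = 3"
    by simp
next
  fix v :: "'a^2^2" assume "v \<in> sl2"
  then show "v + ad zs v + smat (1/2) (ad zs (ad zs v)) = act SZ v"
    by (auto simp: ad_def lie_br_def zs_def SZ_def of_coords_mat2
        coord_x_def coord_y_def coord_z_def field_simps elim!: sl2_cases)
qed

lemma refl_act: "refl ex = act RX" "refl ey = act RY" "refl ez = act RZ"
  by (intro ext, case_tac "x \<in> sl2";
      auto simp: refl_def tform_def ex_def ey_def ez_def RX_def RY_def RZ_def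
        of_coords_mat2 coord_x_def coord_y_def coord_z_def field_simps elim!: sl2_cases)+

lemma act_add: "u \<in> sl2 \<Longrightarrow> v \<in> sl2 \<Longrightarrow> act A (u + v) = act A u + act A v"
  by (cases A) (auto simp: of_coords_mat2 coord_x_def coord_y_def coord_z_def field_simps
      elim!: sl2_cases)

lemma act_smat: "u \<in> sl2 \<Longrightarrow> act A (smat c u) = smat c (act A u)"
  by (cases A) (auto simp: of_coords_mat2 coord_x_def coord_y_def coord_z_def field_simps
      elim!: sl2_cases)

lemma rho_act: "rho = act (imult SX SY)"
  unfolding rho_def
proof (rule the_equality)
  let ?R = "act (imult SX SY) :: 'a::field_char_0 sl2_map"
  have R: "imult SX SY = IMat 0 0 1 1 0 0 0 1 0"
    by (simp add: SX_def SY_def)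
  show "?R \<in> extensional sl2 \<and> (\<forall>u\<in>sl2. \<forall>v\<in>sl2. ?R (u + v) = ?R u + ?R v) \<and>
    (\<forall>c. \<forall>u\<in>sl2. ?R (smat c u) = smat c (?R u)) \<and> ?R ex = ey \<and> ?R ey = ez \<and> ?R ez = ex"
    unfolding R
    by (simp add: act_extensional act_add act_smat act_basis del: act.simps)
       (simp add: of_coords_mat2 ex_def ey_def ez_def)
next
  fix f :: "'a::field_char_0 sl2_map"
  assume f: "f \<in> extensional sl2 \<and> (\<forall>u\<in>sl2. \<forall>v\<in>sl2. f (u + v) = f u + f v) \<and>
    (\<forall>c. \<forall>u\<in>sl2. f (smat c u) = smat c (f u)) \<and> f ex = ey \<and> f ey = ez \<and> f ez = ex"
  show "f = act (imult SX SY)"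
  proof (rule extensionalityI[OF conjunct1[OF f] act_extensional])
    fix v :: "'a^2^2" assume v: "v \<in> sl2"
    have "f v = f (smat (coord_x v) ex + smat (coord_y v) ey + smat (coord_z v) ez)"
      using of_coords_coords[OF v] by (simp add: of_coords_def)
    also have "\<dots> = of_coords (coord_z v) (coord_x v) (coord_y v)"
      using f by (simp add: of_coords_def sl2_add sl2_smat add_ac)
    finally show "f v = act (imult SX SY) v"
      using v by (simp add: SX_def SY_def)
  qed
qed

lemma unimodular_generators [simp]:
  "unimodular SX" "unimodular SY" "unimodular SZ"
  "unimodular RX" "unimodular RY" "unimodular RZ"
  by (simp_all add: unimodular_def imat_defs)

lemma inv_sigma_act:
  "inv\<^bsub>Bsl2\<^esub> sigma_x = act (iinv SX)"
  "inv\<^bsub>Bsl2\<^esub> sigma_y = act (iinv SY)"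
  "inv\<^bsub>Bsl2\<^esub> sigma_z = act (iinv SZ)"
  by (simp_all add: sigma_x_act sigma_y_act sigma_z_act inv_act)

lemma tau_act:
  "tau_x = act (imult (imult SY SZ) SY)"
  "tau_y = act (imult (imult SZ SX) SZ)"
  "tau_z = act (imult (imult SX SY) SX)"
  by (simp_all add: tau_x_def tau_y_def tau_z_def sigma_x_act sigma_y_act sigma_z_act
      act_imult unimodular_imult)


section \<open>Reduction modulo 2 and the homomorphism onto \<open>S\<^sub>3\<close>\<close>

fun imod2 :: "imat \<Rightarrow> imat" where
  "imod2 (IMat a b c d e f g h i) =
     IMat (of_bool (odd a)) (of_bool (odd b)) (of_bool (odd c))
          (of_bool (odd d)) (of_bool (odd e)) (of_bool (odd f))
          (of_bool (odd g)) (of_bool (odd h)) (of_bool (odd i))"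

lemma imod2_imult: "imod2 (imult A B) = imod2 (imult (imod2 A) (imod2 B))"
  by (cases A; cases B) (simp only: imult.simps imod2.simps imat.inject, intro conjI,
      simp_all add: even_add)

definition perm_imat :: "(nat \<Rightarrow> nat) \<Rightarrow> imat" where
  "perm_imat p = IMat (of_bool (p 1 = 1)) (of_bool (p 2 = 1)) (of_bool (p 3 = 1))
                      (of_bool (p 1 = 2)) (of_bool (p 2 = 2)) (of_bool (p 3 = 2))
                      (of_bool (p 1 = 3)) (of_bool (p 2 = 3)) (of_bool (p 3 = 3))"

lemma imod2_perm_imat [simp]: "imod2 (perm_imat p) = perm_imat p"
  by (simp add: perm_imat_def)

lemma perm_imat_id: "perm_imat id = ione"
  by (simp add: perm_imat_def ione_def)

lemma permutes3_values:
  assumes "p permutes {1..3::nat}" "j \<in> {1, 2, 3}"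
  shows "p j \<in> {1, 2, 3}"
  using permutes_in_image[OF assms(1), of j] assms(2) by auto

lemma imult_perm_imat:
  assumes "q permutes {1..3}"
  shows "imult (perm_imat p) (perm_imat q) = perm_imat (p \<circ> q)"
proof -
  have column: "of_bool (p 1 = i) * of_bool (k = 1) + of_bool (p 2 = i) * of_bool (k = 2)
      + of_bool (p 3 = i) * of_bool (k = 3) = (of_bool (p k = i) :: int)"
    if "k \<in> {1, 2, 3}" for i k :: nat
    using that by auto
  have "q 1 \<in> {1, 2, 3}" "q 2 \<in> {1, 2, 3}" "q 3 \<in> {1, 2, 3}"
    using permutes3_values[OF assms] by simp_all
  then show ?thesis
    by (simp only: perm_imat_def imult.simps column comp_apply)
qed

lemma perm_imat_inj:
  assumes p: "p permutes {1..3}" and q: "q permutes {1..3}"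
    and eq: "perm_imat p = perm_imat q"
  shows "p = q"
proof
  fix j :: nat
  show "p j = q j"
  proof (cases "j \<in> {1, 2, 3}")
    case True
    then show ?thesis
      using eq permutes3_values[OF p True] permutes3_values[OF q True]
      by (auto simp: perm_imat_def)
  next
    case False
    then show ?thesis
      using permutes_not_in[OF p] permutes_not_in[OF q] by auto
  qed
qed

definition mod2_perm :: "imat \<Rightarrow> (nat \<Rightarrow> nat) \<Rightarrow> bool" where
  "mod2_perm A p \<longleftrightarrow> p permutes {1..3} \<and> imod2 A = perm_imat p"

lemma mod2_perm_imult:
  assumes "mod2_perm A p" "mod2_perm B q"
  shows "mod2_perm (imult A B) (p \<circ> q)"
  using assms imod2_imult[of A B] imult_perm_imat[of q p] permutes_compose[of q _ p]
  by (simp add: mod2_perm_def)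

lemma mod2_perm_generators:
  "mod2_perm SX (Transposition.transpose 2 3)" "mod2_perm (iinv SX) (Transposition.transpose 2 3)"
  "mod2_perm SY (Transposition.transpose 1 3)" "mod2_perm (iinv SY) (Transposition.transpose 1 3)"
  "mod2_perm SZ (Transposition.transpose 1 2)" "mod2_perm (iinv SZ) (Transposition.transpose 1 2)"
  by (simp_all add: mod2_perm_def permutes_swap_id perm_imat_def imat_defs
      Transposition.transpose_def)

definition perm_of :: "('a::field_char_0 sl2_map) \<Rightarrow> (nat \<Rightarrow> nat)" where
  "perm_of g = (THE p. \<exists>A. g = act A \<and> mod2_perm A p)"

lemma perm_of_act:
  assumes "mod2_perm A p"
  shows "perm_of (act A :: 'a::field_char_0 sl2_map) = p"
  unfolding perm_of_def
proof (rule the_equality)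
  fix q assume "\<exists>B. (act A :: 'a sl2_map) = act B \<and> mod2_perm B q"
  then obtain B where "(act A :: 'a sl2_map) = act B" "mod2_perm B q"
    by blast
  with act_inj assms show "q = p"
    by (metis mod2_perm_def perm_imat_inj)
qed (use assms in blast)

lemma perm_of_eq_id:
  assumes "mod2_perm A p"
  shows "perm_of (act A :: 'a::field_char_0 sl2_map) = id \<longleftrightarrow> imod2 A = ione"
  using assms perm_imat_inj[of p id] permutes_id[of "{1..3::nat}"]
  by (auto simp: perm_of_act mod2_perm_def perm_imat_id)


lemma Ggrp_mult [simp]: "mult Ggrp = mult Bsl2"
  by (simp add: Ggrp_def)

lemma Ggrp_one [simp]: "one Ggrp = one Bsl2"
  by (simp add: Ggrp_def)

lemma group_Ggrp: "group Ggrp"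
  unfolding Ggrp_def by (rule group.group_subgroup_generated[OF group_BijGroup])

interpretation Ggrp: group "Ggrp :: ('a::field_char_0 sl2_map) monoid"
  by (rule group_Ggrp)

lemma Ggrp_carrier: "carrier Ggrp = generate Bsl2 {sigma_x, sigma_y, sigma_z}"
  by (simp add: Ggrp_def carrier_subgroup_generated Int_absorb1
      sigma_x_act sigma_y_act sigma_z_act)

lemma Ggrp_m_closed: "a \<in> carrier Ggrp \<Longrightarrow> b \<in> carrier Ggrp \<Longrightarrow> a \<otimes>\<^bsub>Bsl2\<^esub> b \<in> carrier Ggrp"
  unfolding Ggrp_carrier by (rule generate.eng)

lemma Ggrp_elements:
  assumes "g \<in> carrier Ggrp"
  shows "\<exists>A p. g = act A \<and> unimodular A \<and> mod2_perm A p"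
  using assms unfolding Ggrp_carrier
proof (induction rule: generate.induct)
  case one
  have "mod2_perm ione id"
    by (simp add: mod2_perm_def perm_imat_id ione_def)
  then show ?case
    unfolding one_Bsl2 using unimodular_ione by blast
next
  case (incl h)
  then show ?case
    using mod2_perm_generators by (auto simp: sigma_x_act sigma_y_act sigma_z_act)
next
  case (inv h)
  then show ?case
    using mod2_perm_generators unimodular_iinv unimodular_generators
    by (auto simp: inv_sigma_act)
next
  case (eng g h)
  then obtain A p B q where "g = act A" "unimodular A" "mod2_perm A p"
    "h = act B" "unimodular B" "mod2_perm B q"
    by blast
  then have "g \<otimes>\<^bsub>Bsl2\<^esub> h = act (imult A B)" "unimodular (imult A B)"
    "mod2_perm (imult A B) (p \<circ> q)"
    by (simp_all add: act_imult unimodular_imult mod2_perm_imult)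
  then show ?case
    by blast
qed

lemma perm_of_hom: "(perm_of :: ('a::field_char_0 sl2_map) \<Rightarrow> _) \<in> hom Ggrp (sym_group 3)"
proof (rule homI)
  fix g :: "'a sl2_map" assume "g \<in> carrier Ggrp"
  then obtain A p where "g = act A" "mod2_perm A p"
    using Ggrp_elements by blast
  then have "perm_of g = p" "p permutes {1..3}"
    by (simp_all add: perm_of_act mod2_perm_def)
  then show "perm_of g \<in> carrier (sym_group 3)"
    by (simp add: sym_group_carrier)
next
  fix g h :: "'a sl2_map" assume "g \<in> carrier Ggrp" "h \<in> carrier Ggrp"
  then obtain A p B q where "g = act A" "unimodular A" "mod2_perm A p"
    "h = act B" "unimodular B" "mod2_perm B q"
    using Ggrp_elements by metis
  then show "perm_of (g \<otimes>\<^bsub>Ggrp\<^esub> h) = perm_of g \<otimes>\<^bsub>sym_group 3\<^esub> perm_of h"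
    by (simp add: act_imult perm_of_act mod2_perm_imult sym_group_mult)
qed

lemma group_hom_perm_of: "group_hom Ggrp (sym_group 3) perm_of"
  by (simp add: group_hom_def group_hom_axioms_def group_Ggrp sym_group_is_group perm_of_hom)


section \<open>The even subgroup \<open>W\<^sup>+\<close> as even words in the reflections\<close>

lemma wprod_Nil [simp]: "wprod [] = \<one>\<^bsub>Bsl2\<^esub>"
  by (simp add: wprod_def)

lemma wprod_Cons [simp]: "wprod (r # ws) = r \<otimes>\<^bsub>Bsl2\<^esub> wprod ws"
  by (simp add: wprod_def)

lemma Wgens_act: "Wgens = {act RX, act RY, act RZ}"
  by (simp add: Wgens_def refl_act)

lemma Wgens_carrier: "Wgens \<subseteq> carrier Bsl2"
  by (simp add: Wgens_act)

lemma wprod_act: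
  assumes "set ws \<subseteq> Wgens"
  shows "\<exists>M. wprod ws = act M \<and> idet M = (-1) ^ length ws \<and> imod2 M = ione"
  using assms
proof (induction ws)
  case Nil
  show ?case
    by (rule exI[of _ ione]) (simp add: one_Bsl2 ione_def)
next
  case (Cons r ws)
  then obtain M where M: "wprod ws = act M" "idet M = (-1) ^ length ws" "imod2 M = ione"
    by auto
  obtain R where R: "r = act R" "R \<in> {RX, RY, RZ}"
    using Cons.prems by (auto simp: Wgens_act)
  have "unimodular M"
    using M(2) by (simp add: unimodular_def minus_one_power_iff)
  then have "wprod (r # ws) = act (imult R M)"
    using R M(1) by (auto simp: act_imult)
  moreover have "idet (imult R M) = (-1) ^ length (r # ws)"
    using R(2) M(2) by (auto simp: idet_imult imat_defs)
  moreover have "imod2 (imult R M) = ione"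
    using R(2) M(3) imod2_imult[of R M] by (auto simp: imat_defs)
  ultimately show ?case
    by blast
qed

lemma wprod_carrier: "set ws \<subseteq> Wgens \<Longrightarrow> wprod ws \<in> carrier Bsl2"
  using Wgens_carrier by (induction ws) auto

lemma wprod_append:
  assumes "set ws \<subseteq> Wgens" "set ws' \<subseteq> Wgens"
  shows "wprod (ws @ ws') = wprod ws \<otimes>\<^bsub>Bsl2\<^esub> wprod ws'"
  using assms
  by (induction ws) (auto simp: wprod_carrier Bsl2.m_assoc dest: subsetD[OF Wgens_carrier])

text \<open>The reflections are involutions, so the subgroup they generate consists of the
  products of words in them.\<close>

lemma reflection_inv: "r \<in> Wgens \<Longrightarrow> inv\<^bsub>Bsl2\<^esub> r = r"
  by (auto simp: Wgens_act inv_act) (simp_all add: imat_defs)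

lemma Wset_words: "(Wset :: 'a::field_char_0 sl2_map set) = {wprod ws | ws. set ws \<subseteq> Wgens}"
proof (intro equalityI subsetI)
  fix w :: "'a sl2_map" assume "w \<in> Wset"
  then show "w \<in> {wprod ws | ws. set ws \<subseteq> Wgens}"
    unfolding Wset_def
  proof (induction rule: generate.induct)
    case one
    show ?case
      by (intro CollectI exI[of _ "[]"]) simp
  next
    case (incl h)
    then show ?case
      using Wgens_carrier by (intro CollectI exI[of _ "[h]"]) auto
  next
    case (inv h)
    then show ?case
      using Wgens_carrier by (intro CollectI exI[of _ "[h]"]) (auto simp: reflection_inv)
  next
    case (eng g h)
    then obtain us vs where "g = wprod us" "set us \<subseteq> Wgens" "h = wprod vs" "set vs \<subseteq> Wgens"
      by blast
    then show ?case
      by (intro CollectI exI[of _ "us @ vs"]) (simp add: wprod_append)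
  qed
next
  fix w :: "'a sl2_map" assume "w \<in> {wprod ws | ws. set ws \<subseteq> Wgens}"
  then obtain ws where "w = wprod ws" "set ws \<subseteq> Wgens"
    by blast
  then show "w \<in> Wset"
    unfolding Wset_def
    by (induction ws arbitrary: w) (auto intro: generate.one generate.incl generate.eng)
qed

text \<open>The parity of the length of an element of \<open>W\<close> is the parity of any word
  representing it, since the determinant of the matrix records it.\<close>

lemma wlen_parity:
  assumes ws: "set ws \<subseteq> Wgens"
  shows "even (wlen (wprod ws)) \<longleftrightarrow> even (length ws)"
proof -
  let ?P = "\<lambda>n. \<exists>vs. set vs \<subseteq> Wgens \<and> length vs = n \<and> wprod vs = wprod ws"
  have "?P (Least ?P)"
    by (rule LeastI[of ?P "length ws"]) (use ws in blast)
  then obtain vs where vs: "set vs \<subseteq> Wgens" "length vs = wlen (wprod ws)" "wprod vs = wprod ws"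
    unfolding wlen_def by blast
  obtain M where M: "wprod ws = act M" "idet M = (-1) ^ length ws"
    using wprod_act[OF ws] by blast
  obtain N where N: "wprod vs = act N" "idet N = (-1) ^ length vs"
    using wprod_act[OF vs(1)] by blast
  have "N = M"
    using act_inj M(1) N(1) vs(3) by metis
  then have "(-1 :: int) ^ length vs = (-1) ^ length ws"
    using M(2) N(2) by simp
  then show ?thesis
    using vs(2) by (auto simp: minus_one_power_iff split: if_splits)
qed

lemma Wplus_words: "Wplus = {wprod ws | ws. set ws \<subseteq> Wgens \<and> even (length ws)}"
  unfolding Wplus_def Wset_words using wlen_parity by blast

lemma Wplus_one: "\<one>\<^bsub>Bsl2\<^esub> \<in> Wplus"
  unfolding Wplus_words by (intro CollectI exI[of _ "[]"]) simp

lemma Wplus_carrier: "Wplus \<subseteq> carrier Bsl2"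
  unfolding Wplus_words using wprod_carrier by blast

lemma Wplus_mult:
  assumes "a \<in> Wplus" "b \<in> Wplus"
  shows "a \<otimes>\<^bsub>Bsl2\<^esub> b \<in> Wplus"
proof -
  obtain us vs where "a = wprod us" "set us \<subseteq> Wgens" "even (length us)"
    "b = wprod vs" "set vs \<subseteq> Wgens" "even (length vs)"
    using assms unfolding Wplus_words by blast
  then show ?thesis
    unfolding Wplus_words by (intro CollectI exI[of _ "us @ vs"]) (simp add: wprod_append)
qed

lemma Wplus_act: "w \<in> Wplus \<Longrightarrow> \<exists>M. w = act M \<and> unimodular M \<and> imod2 M = ione"
  unfolding Wplus_words
  using wprod_act by (fastforce simp: unimodular_def minus_one_power_iff)


definition sigma_mats :: "imat set" where
  "sigma_mats = {SX, SY, SZ, iinv SX, iinv SY, iinv SZ}"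

lemma sigma_mats_Ggrp:
  assumes "S \<in> sigma_mats"
  shows "act S \<in> carrier Ggrp" "unimodular S"
proof -
  have "act S \<in> generate Bsl2 {sigma_x, sigma_y, sigma_z}"
    using assms unfolding sigma_mats_def
    by (auto simp flip: sigma_x_act sigma_y_act sigma_z_act inv_sigma_act
        intro: generate.incl generate.inv)
  then show "act S \<in> carrier Ggrp"
    by (simp add: Ggrp_carrier)
  show "unimodular S"
    using assms by (auto simp: sigma_mats_def unimodular_iinv)
qed

lemma act_imult_Ggrp:
  assumes "(act A :: 'a::field_char_0 sl2_map) \<in> carrier Ggrp"
    and "(act B :: 'a sl2_map) \<in> carrier Ggrp" "unimodular A" "unimodular B"
  shows "(act (imult A B) :: 'a sl2_map) \<in> carrier Ggrp"
proof -
  have "(act A :: 'a sl2_map) \<otimes>\<^bsub>Bsl2\<^esub> act B \<in> carrier Ggrp"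
    using assms(1,2) by (rule Ggrp_m_closed)
  then show ?thesis
    using assms(3,4) by (simp add: act_imult)
qed

text \<open>A product of two reflections is \<open>1\<close> or a square \<open>\<sigma>\<^sup>\<plusminus>\<^sup>2\<close>, e.g.
  \<open>r\<^sub>y r\<^sub>z = \<sigma>\<^sub>x\<^sup>2\<close>.\<close>

lemma reflection_pair_Ggrp:
  assumes "a \<in> (Wgens :: 'a::field_char_0 sl2_map set)" "b \<in> Wgens"
  shows "a \<otimes>\<^bsub>Bsl2\<^esub> b \<in> carrier Ggrp"
proof -
  obtain R R' where RR': "a = act R" "b = act R'" "R \<in> {RX, RY, RZ}" "R' \<in> {RX, RY, RZ}"
    using assms by (auto simp: Wgens_act)
  have "imult R R' = ione \<or> (\<exists>S\<in>sigma_mats. imult R R' = imult S S)"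
    using RR'(3,4) by (auto simp: sigma_mats_def imat_defs)
  moreover have "(act ione :: 'a sl2_map) \<in> carrier Ggrp"
    using Ggrp.one_closed by (simp add: one_Bsl2)
  ultimately have "(act (imult R R') :: 'a sl2_map) \<in> carrier Ggrp"
    using sigma_mats_Ggrp act_imult_Ggrp by metis
  then show ?thesis
    using RR' by (auto simp: act_imult)
qed

lemma Wplus_subset_Ggrp: "(Wplus :: ('a::field_char_0 sl2_map) set) \<subseteq> carrier Ggrp"
proof
  fix w :: "'a sl2_map" assume "w \<in> Wplus"
  then obtain ws where "w = wprod ws" "set ws \<subseteq> Wgens" "even (length ws)"
    unfolding Wplus_words by blast
  then show "w \<in> carrier Ggrp"
  proof (induction ws arbitrary: w rule: induct_list012)
    case 1
    then show ?case
      using Ggrp.one_closed by simp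
  next
    case (2 r)
    then show ?case
      by simp
  next
    case (3 a b ws)
    then have "a \<in> carrier Bsl2" "b \<in> carrier Bsl2" "wprod ws \<in> carrier Bsl2"
      using Wgens_carrier wprod_carrier by auto
    then have "wprod (a # b # ws) = (a \<otimes>\<^bsub>Bsl2\<^esub> b) \<otimes>\<^bsub>Bsl2\<^esub> wprod ws"
      by (simp add: Bsl2.m_assoc)
    moreover have "a \<otimes>\<^bsub>Bsl2\<^esub> b \<in> carrier Ggrp" "wprod ws \<in> carrier Ggrp"
      using 3 reflection_pair_Ggrp by auto
    ultimately show ?case
      using Ggrp_m_closed "3.prems"(1) by simp
  qed
qed


section \<open>Covering \<open>G\<close> by six cosets of \<open>W\<^sup>+\<close>\<close>

lemma (in group) generate_subset_cosets:
  assumes S: "S \<subseteq> carrier G"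
    and T: "T \<subseteq> carrier G" "\<one> \<in> T"
    and K: "K \<subseteq> carrier G" "\<one> \<in> K" "\<And>a b. a \<in> K \<Longrightarrow> b \<in> K \<Longrightarrow> a \<otimes> b \<in> K"
    and step: "\<And>s t. s \<in> S \<union> m_inv G ` S \<Longrightarrow> t \<in> T \<Longrightarrow> \<exists>t'\<in>T. \<exists>k\<in>K. s \<otimes> t = t' \<otimes> k"
  shows "generate G S \<subseteq> (\<Union>t\<in>T. t <# K)"
proof -
  define U where "U = (\<Union>t\<in>T. t <# K)"
  have U_carrier: "U \<subseteq> carrier G"
    using T K by (auto simp: U_def l_coset_def)
  have left_step: "s \<otimes> u \<in> U" if s: "s \<in> S \<union> m_inv G ` S" and u: "u \<in> U" for s u
  proof -
    obtain t k where tk: "t \<in> T" "k \<in> K" "u = t \<otimes> k"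
      using u by (auto simp: U_def l_coset_def)
    obtain t' k' where t'k': "t' \<in> T" "k' \<in> K" "s \<otimes> t = t' \<otimes> k'"
      using step[OF s tk(1)] by blast
    have "s \<in> carrier G"
      using s S by auto
    moreover have "t \<in> carrier G" "k \<in> carrier G" "t' \<in> carrier G" "k' \<in> carrier G"
      using tk t'k' T K(1) by auto
    ultimately have "s \<otimes> u = (t' \<otimes> k') \<otimes> k"
      by (simp add: tk(3) t'k'(3) flip: m_assoc)
    then have "s \<otimes> u = t' \<otimes> (k' \<otimes> k)"
      using \<open>t' \<in> carrier G\<close> \<open>k' \<in> carrier G\<close> \<open>k \<in> carrier G\<close> by (simp add: m_assoc)
    then show ?thesis
      using t'k' tk K(3) by (auto simp: U_def l_coset_def)
  qed
  have "g \<in> carrier G \<and> (\<forall>u\<in>U. g \<otimes> u \<in> U)" if "g \<in> generate G S" for g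
    using that
  proof (induction rule: generate.induct)
    case (eng g h)
    then show ?case
      using U_carrier by (auto simp: m_assoc)
  qed (use S U_carrier left_step in auto)
  moreover have "\<one> \<in> U"
    using T K by (force simp: U_def l_coset_def)
  ultimately show ?thesis
    unfolding U_def[symmetric] by (metis r_one subsetI)
qed

definition coset_reps :: "imat set" where
  "coset_reps = {ione, imult (imult SY SZ) SY, imult (imult SZ SX) SZ, imult (imult SX SY) SX,
                 imult SX SY, imult (imult SX SY) (imult SX SY)}"

definition reflection_pairs :: "imat set" where
  "reflection_pairs = {ione, imult RX RY, imult RX RZ, imult RY RX, imult RY RZ,
                       imult RZ RX, imult RZ RY}"

lemma unimodular_coset_reps: "t \<in> coset_reps \<Longrightarrow> unimodular t"
  by (auto simp: coset_reps_def unimodular_imult)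

lemma reflection_pairs_cases:
  assumes "P \<in> reflection_pairs"
  obtains "P = ione" | R R' where "R \<in> {RX, RY, RZ}" "R' \<in> {RX, RY, RZ}" "P = imult R R'"
  using assms by (auto simp: reflection_pairs_def)

lemma reflection_pairs_unimodular: "P \<in> reflection_pairs \<Longrightarrow> unimodular P"
  by (erule reflection_pairs_cases) (auto simp: unimodular_imult)

lemma reflection_pairs_Wplus:
  assumes "P \<in> reflection_pairs"
  shows "(act P :: 'a::field_char_0 sl2_map) \<in> Wplus"
  using assms
proof (cases rule: reflection_pairs_cases)
  case 1
  then show ?thesis
    using Wplus_one by (simp add: one_Bsl2)
next
  case (2 R R')
  then have "(act P :: 'a sl2_map) = wprod [act R, act R']" "set [act R, act R'] \<subseteq> Wgens"
    by (auto simp: act_imult Wgens_act)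
  then show ?thesis
    unfolding Wplus_words by (intro CollectI exI[of _ "[act R, act R']"]) simp
qed

lemma coset_reps_step:
  assumes "S \<in> sigma_mats" "t \<in> coset_reps"
  shows "\<exists>t'\<in>coset_reps. \<exists>P\<in>reflection_pairs. imult S t = imult t' P"
  using assms unfolding sigma_mats_def coset_reps_def
  by (elim insertE emptyE; simp add: reflection_pairs_def imat_defs)

lemma Ggrp_covered:
  "carrier (Ggrp :: 'a::field_char_0 sl2_map monoid) \<subseteq> (\<Union>t\<in>coset_reps. act t <#\<^bsub>Bsl2\<^esub> Wplus)"
proof -
  have "generate (Bsl2 :: 'a sl2_map monoid) {sigma_x, sigma_y, sigma_z}
      \<subseteq> (\<Union>t\<in>act ` coset_reps. t <#\<^bsub>Bsl2\<^esub> Wplus)"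
  proof (rule Bsl2.generate_subset_cosets)
    show "{sigma_x, sigma_y, sigma_z} \<subseteq> carrier Bsl2"
      by (simp add: sigma_x_act sigma_y_act sigma_z_act)
    show "act ` coset_reps \<subseteq> carrier Bsl2" "\<one>\<^bsub>Bsl2\<^esub> \<in> act ` coset_reps"
      by (auto simp: unimodular_coset_reps one_Bsl2 coset_reps_def)
  next
    fix s t :: "'a sl2_map"
    assume s: "s \<in> {sigma_x, sigma_y, sigma_z} \<union> m_inv Bsl2 ` {sigma_x, sigma_y, sigma_z}"
      and t: "t \<in> act ` coset_reps"
    obtain S where S: "S \<in> sigma_mats" "s = act S"
      using s by (auto simp: sigma_mats_def sigma_x_act sigma_y_act sigma_z_act inv_act)
    obtain t0 where t0: "t0 \<in> coset_reps" "t = act t0"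
      using t by blast
    obtain t' P where t'P: "t' \<in> coset_reps" "P \<in> reflection_pairs" "imult S t0 = imult t' P"
      using coset_reps_step[OF S(1) t0(1)] by blast
    have "s \<otimes>\<^bsub>Bsl2\<^esub> t = act t' \<otimes>\<^bsub>Bsl2\<^esub> act P"
      using S t0 t'P sigma_mats_Ggrp(2) unimodular_coset_reps reflection_pairs_unimodular
      by (simp add: act_imult)
    then show "\<exists>t'\<in>act ` coset_reps. \<exists>k\<in>Wplus. s \<otimes>\<^bsub>Bsl2\<^esub> t = t' \<otimes>\<^bsub>Bsl2\<^esub> k"
      using t'P reflection_pairs_Wplus by blast
  qed (use Wplus_carrier Wplus_one Wplus_mult in auto)
  then show ?thesis
    by (simp add: Ggrp_carrier)
qed

lemma coset_reps_Ggrp: "t \<in> coset_reps \<Longrightarrow> (act t :: 'a::field_char_0 sl2_map) \<in> carrier Ggrp"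
  using Ggrp.one_closed sigma_mats_Ggrp[of SX] sigma_mats_Ggrp[of SY] sigma_mats_Ggrp[of SZ]
  by (auto simp: coset_reps_def sigma_mats_def one_Bsl2 intro!: act_imult_Ggrp unimodular_imult)


section \<open>Kernel and image of the homomorphism to \<open>S\<^sub>3\<close>\<close>

lemma perm_of_Wplus: "w \<in> Wplus \<Longrightarrow> perm_of w = id"
  using Wplus_act perm_of_act permutes_id
  by (metis mod2_perm_def perm_imat_id)

lemma coset_reps_perm_of:
  assumes "t \<in> coset_reps" "perm_of (act t :: 'a::field_char_0 sl2_map) = id"
  shows "t = ione"
proof -
  obtain A p where "(act t :: 'a sl2_map) = act A" "mod2_perm A p"
    using Ggrp_elements[OF coset_reps_Ggrp[OF assms(1)]] by blast
  then have "imod2 t = ione"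
    using assms(2) act_inj perm_of_eq_id by metis
  then show ?thesis
    using assms(1) by (auto simp: coset_reps_def imat_defs)
qed

lemma kernel_perm_of: "kernel Ggrp (sym_group 3) perm_of = (Wplus :: 'a::field_char_0 sl2_map set)"
proof (intro equalityI subsetI)
  fix w :: "'a sl2_map" assume "w \<in> Wplus"
  then show "w \<in> kernel Ggrp (sym_group 3) perm_of"
    using Wplus_subset_Ggrp perm_of_Wplus by (auto simp: kernel_def sym_group_one)
next
  fix g :: "'a sl2_map" assume "g \<in> kernel Ggrp (sym_group 3) perm_of"
  then have g: "g \<in> carrier Ggrp" "perm_of g = id"
    by (simp_all add: kernel_def sym_group_one)
  then obtain t w where tw: "t \<in> coset_reps" "w \<in> Wplus" "g = act t \<otimes>\<^bsub>Bsl2\<^esub> w"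
    using Ggrp_covered by (auto simp: l_coset_def)
  have "perm_of g = perm_of (act t :: 'a sl2_map) \<circ> perm_of w"
    using hom_mult[OF perm_of_hom coset_reps_Ggrp[OF tw(1)] subsetD[OF Wplus_subset_Ggrp tw(2)]]
    by (simp add: tw(3) sym_group_mult)
  then have "perm_of (act t :: 'a sl2_map) = id"
    using g(2) perm_of_Wplus[OF tw(2)] by simp
  then have "t = ione"
    by (rule coset_reps_perm_of[OF tw(1)])
  then show "g \<in> Wplus"
    using tw Wplus_carrier by (auto simp flip: one_Bsl2)
qed

text \<open>The image contains the three transpositions (images of the \<open>\<sigma>\<close>'s), which generate
  \<open>S\<^sub>3\<close>.\<close>

lemma perm_of_surj: "perm_of ` carrier Ggrp = carrier (sym_group 3)"
proof
  show "perm_of ` carrier Ggrp \<subseteq> carrier (sym_group 3)"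
    using perm_of_hom by (auto simp: hom_def)
next
  let ?I = "perm_of ` carrier (Ggrp :: ('a::field_char_0 sl2_map) monoid)"
  have image: "subgroup ?I (sym_group 3)"
    by (rule group_hom.img_is_subgroup[OF group_hom_perm_of])
  have gens: "(act SX :: 'a sl2_map) \<in> carrier Ggrp" "(act SY :: 'a sl2_map) \<in> carrier Ggrp"
    "(act SZ :: 'a sl2_map) \<in> carrier Ggrp"
    using sigma_mats_Ggrp(1)[of SX] sigma_mats_Ggrp(1)[of SY] sigma_mats_Ggrp(1)[of SZ]
    by (simp_all add: sigma_mats_def)
  have sigma_images: "Transposition.transpose 2 3 \<in> ?I" "Transposition.transpose 1 3 \<in> ?I"
    "Transposition.transpose 1 2 \<in> ?I"
    using rev_image_eqI[where f = perm_of, OF gens(1) perm_of_act[OF mod2_perm_generators(1), symmetric]]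
      rev_image_eqI[where f = perm_of, OF gens(2) perm_of_act[OF mod2_perm_generators(3), symmetric]]
      rev_image_eqI[where f = perm_of, OF gens(3) perm_of_act[OF mod2_perm_generators(5), symmetric]]
    by simp_all
  have transpositions: "Transposition.transpose a b \<in> ?I"
    if "a \<in> {1..3}" "b \<in> {1..3}" "a \<noteq> b" for a b :: nat
  proof -
    have "a \<in> {1, 2, 3}" "b \<in> {1, 2, 3}"
      using that(1,2) by auto
    then have "Transposition.transpose a b
        \<in> {Transposition.transpose 2 3, Transposition.transpose 1 3, Transposition.transpose 1 2}"
      using that(3) by (auto simp: transpose_commute)
    then show ?thesis
      using sigma_images by (elim insertE emptyE) simp_all
  qed
  show "carrier (sym_group 3) \<subseteq> ?I"
  proof
    fix p assume "p \<in> carrier (sym_group 3)"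
    then have "p permutes {1..3}"
      by (simp add: sym_group_carrier)
    then show "p \<in> ?I"
      using finite_atLeastAtMost[of 1 3]
    proof (induction rule: permutes_induct)
      case id
      show ?case
        using subgroup.one_closed[OF image] by (simp only: sym_group_one)
    next
      case (swap a b p)
      have "Transposition.transpose a b \<otimes>\<^bsub>sym_group 3\<^esub> p \<in> ?I"
        by (rule subgroup.m_closed[OF image transpositions[OF swap(1-3)] \<open>p \<in> ?I\<close>])
      then show ?case
        by (simp only: sym_group_mult)
    qed
  qed
qed

lemma left_cosets_Wplus:
  "{g <#\<^bsub>Ggrp\<^esub> Wplus | g. g \<in> carrier Ggrp}
    = (\<lambda>t. (act t :: 'a::field_char_0 sl2_map) <#\<^bsub>Ggrp\<^esub> Wplus) ` coset_reps"
proof (intro equalityI subsetI)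
  have sub: "subgroup (Wplus :: 'a sl2_map set) Ggrp"
    using group_hom.subgroup_kernel[OF group_hom_perm_of] by (simp add: kernel_perm_of)
  fix X assume "X \<in> {g <#\<^bsub>Ggrp\<^esub> (Wplus :: 'a sl2_map set) | g. g \<in> carrier Ggrp}"
  then obtain g where g: "X = g <#\<^bsub>Ggrp\<^esub> Wplus" "g \<in> carrier Ggrp"
    by blast
  then have "g \<in> (\<Union>t\<in>coset_reps. act t <#\<^bsub>Bsl2\<^esub> Wplus)"
    using Ggrp_covered by blast
  then obtain t where t: "t \<in> coset_reps" "g \<in> act t <#\<^bsub>Ggrp\<^esub> Wplus"
    by (auto simp: l_coset_def)
  have "act t <#\<^bsub>Ggrp\<^esub> Wplus = g <#\<^bsub>Ggrp\<^esub> Wplus"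
    by (rule Ggrp.l_repr_independence[OF t(2) coset_reps_Ggrp[OF t(1)] sub])
  then show "X \<in> (\<lambda>t. act t <#\<^bsub>Ggrp\<^esub> Wplus) ` coset_reps"
    using g t by auto
next
  fix X assume "X \<in> (\<lambda>t. (act t :: 'a sl2_map) <#\<^bsub>Ggrp\<^esub> Wplus) ` coset_reps"
  then obtain t where "t \<in> coset_reps" "X = act t <#\<^bsub>Ggrp\<^esub> Wplus"
    by blast
  then show "X \<in> {g <#\<^bsub>Ggrp\<^esub> Wplus | g. g \<in> carrier Ggrp}"
    using coset_reps_Ggrp by blast
qed

lemma Wplus_normal: "Wplus \<lhd> Ggrp"
  using group_hom.normal_kernel[OF group_hom_perm_of] by (simp add: kernel_perm_of)

lemma quotient_iso_sym_group: "Ggrp Mod Wplus \<cong> sym_group 3"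
  using group_hom.FactGroup_iso[OF group_hom_perm_of perm_of_surj] by (simp add: kernel_perm_of)


theorem proposition7p6:
  shows "(Wplus :: ('a::field_char_0^2^2 \<Rightarrow> 'a^2^2) set) \<lhd> Ggrp
    \<and> {g <#\<^bsub>Ggrp\<^esub> (Wplus :: ('a^2^2 \<Rightarrow> 'a^2^2) set) | g. g \<in> carrier Ggrp}
        = {Wplus, tau_x <#\<^bsub>Ggrp\<^esub> Wplus, tau_y <#\<^bsub>Ggrp\<^esub> Wplus, tau_z <#\<^bsub>Ggrp\<^esub> Wplus,
           rho <#\<^bsub>Ggrp\<^esub> Wplus, (rho \<otimes>\<^bsub>Ggrp\<^esub> rho) <#\<^bsub>Ggrp\<^esub> Wplus}
    \<and> Ggrp Mod Wplus \<cong> sym_group 3"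
proof -
  have trivial_coset: "act ione <#\<^bsub>Ggrp\<^esub> (Wplus :: 'a sl2_map set) = Wplus"
    using Ggrp.lcos_mult_one[OF Wplus_subset_Ggrp] by (simp add: one_Bsl2)
  have rho2: "act (imult (imult SX SY) (imult SX SY))
      = (act (imult SX SY) \<otimes>\<^bsub>Ggrp\<^esub> act (imult SX SY) :: 'a sl2_map)"
    by (simp add: act_imult unimodular_imult)
  have cosets: "{g <#\<^bsub>Ggrp\<^esub> (Wplus :: 'a sl2_map set) | g. g \<in> carrier Ggrp}
      = {Wplus, tau_x <#\<^bsub>Ggrp\<^esub> Wplus, tau_y <#\<^bsub>Ggrp\<^esub> Wplus, tau_z <#\<^bsub>Ggrp\<^esub> Wplus,
         rho <#\<^bsub>Ggrp\<^esub> Wplus, (rho \<otimes>\<^bsub>Ggrp\<^esub> rho) <#\<^bsub>Ggrp\<^esub> Wplus}"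
    by (simp only: left_cosets_Wplus coset_reps_def image_insert image_empty trivial_coset rho2
        tau_act rho_act)
  show ?thesis
    by (intro conjI Wplus_normal cosets quotient_iso_sym_group)
qed

end
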